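(* For every nonzero integer $n$, \[\left\lfloor\frac{1}{e^{\sqrt2/n}-1}\right\rfloor=\left\lfloor\frac{n}{\sqrt2}-\frac12\right\rfloor.\]
   Context: $\lfloor x\rfloor$ denotes the floor of $x$. *)

theory Defs
  imports Complex_Main
begin

end

theory Submission
  imports Defs
begin

text \<open>
  Write f(y) = 1/(e^y - 1) and c(n) = n/sqrt 2 - 1/2, so that f(sqrt 2/n) is approximated
  by 1/y - 1/2 = c(n) with y = sqrt 2/n.  The proof combines two estimates.

  Analytic side: truncated Taylor series of exp give |f(y) - (1/y - 1/2)| <= |y|/10
  for 0 < |y| <= 3/2 (first for y > 0, then for y < 0 via f(-y) = -1 - f(y)).

  Arithmetic side: for odd k the integer k^2 - 2n^2 is odd, hence nonzero, which forces
  |k - n sqrt 2| > sqrt 2/(5|n|); with k = 2m+1 this says every integer m lies at distance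
  more than sqrt 2/(10|n|) from c(n).

  Finally, a real number u that is closer to c than every integer has the same floor as c.
\<close>

lemma exp_ge_taylor_partial_sum:
  fixes x :: real and n :: nat
  assumes "0 \<le> x \<or> even n"
  shows "(\<Sum>m<n. x ^ m / fact m) \<le> exp x"
proof -
  obtain t where "exp x = (\<Sum>m<n. x ^ m / fact m) + exp t / fact n * x ^ n"
    using Maclaurin_exp_le by blast
  moreover have "0 \<le> x ^ n"
    using assms by (auto simp: zero_le_power_eq)
  ultimately show ?thesis
    by (simp add: add_increasing2)
qed

lemma inverse_exp_minus_one_upper:
  fixes y :: real
  assumes "0 < y"
  shows "1 / (exp y - 1) \<le> 1 / y - 1 / 2 + y / 10"
proof -
  define P where "P = 1 + y/2 + y^2/6 + y^3/24"
  have "P > 0"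
    using assms unfolding P_def by (simp add: add_pos_nonneg)
  then have yP: "y * P > 0"
    using assms by simp
  have "(\<Sum>m<5. y ^ m / fact m) = 1 + y * P"
    by (simp add: P_def numeral_eq_Suc fact_numeral eval_nat_numeral algebra_simps)
  then have "1 + y * P \<le> exp y"
    using exp_ge_taylor_partial_sum[of y 5] assms by simp
  then have "1 / (exp y - 1) \<le> 1 / (y * P)"
    using yP by (simp add: frac_le)
  also have "\<dots> \<le> 1 / y - 1 / 2 + y / 10"
  proof -
    have "P * (1 - y/2 + y^2/10) - 1 = y^2/240 * (y * ((y - 1/2)^2 + 7/4) + 4)"
      unfolding P_def by (simp add: field_simps power2_eq_square power3_eq_cube power4_eq_xxxx)
    moreover have "0 \<le> y^2/240 * (y * ((y - 1/2)^2 + 7/4) + 4)"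
      using assms by simp
    ultimately have "1 \<le> P * (1 - y/2 + y^2/10)"
      by linarith
    then have "1 \<le> (y * P) * (1 / y - 1 / 2 + y / 10)"
      using assms by (simp add: algebra_simps power2_eq_square)
    then show ?thesis
      using yP by (simp add: divide_simps mult.commute)
  qed
  finally show ?thesis .
qed

text \<open>Lower estimate for f(y), valid for 0 < y <= 3/2.  It is obtained from
  f(y) = e^(-y)/(1 - e^(-y)), which is increasing in e^(-y), and the cubic Taylor
  lower bound L for e^(-y).\<close>

lemma inverse_exp_minus_one_lower:
  fixes y :: real
  assumes "0 < y" "y \<le> 3/2"
  shows "1 / y - 1 / 2 - y / 10 \<le> 1 / (exp y - 1)"
proof -
  define L where "L = 1 - y + y^2/2 - y^3/6"
  define S where "S = 1 - y/2 + y^2/6"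
  have "S = (y - 3/2)^2 / 6 + 5/8"
    by (simp add: S_def power2_eq_square field_simps)
  then have "S > 0"
    by (simp add: add_nonneg_pos)
  then have yS: "y * S > 0"
    using assms by simp
  have L_S: "1 - L = y * S"
    unfolding L_def S_def by (simp add: algebra_simps power2_eq_square power3_eq_cube)
  have "(\<Sum>m<4. (-y) ^ m / fact m) = L"
    by (simp add: L_def numeral_eq_Suc fact_numeral eval_nat_numeral algebra_simps)
  then have L_le: "L \<le> exp (-y)"
    using exp_ge_taylor_partial_sum[of "-y" 4] by simp
  have "exp (-y) < 1"
    using assms by simp
  have "L - (1 - y/2 - y^2/10) * S = y^2/60 * ((4 - y)^2 - 5)"
    unfolding L_def S_def by (simp add: field_simps power2_eq_square power3_eq_cube power4_eq_xxxx)
  moreover have "(5/2)^2 \<le> (4 - y)^2"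
    using assms by (intro power_mono) auto
  then have "0 \<le> y^2/60 * ((4 - y)^2 - 5)"
    by (simp add: power2_eq_square)
  ultimately have "(1 - y/2 - y^2/10) * S \<le> L"
    by linarith
  then have "(1 / y - 1 / 2 - y / 10) * (y * S) \<le> L"
    using assms by (simp add: algebra_simps power2_eq_square)
  then have "1 / y - 1 / 2 - y / 10 \<le> L / (1 - L)"
    using L_S yS by (simp add: divide_simps)
  also have "\<dots> \<le> exp (-y) / (1 - exp (-y))"
    using L_le \<open>exp (-y) < 1\<close> L_S yS by (simp add: divide_simps algebra_simps)
  also have "\<dots> = 1 / (exp y - 1)"
    using assms by (simp add: exp_minus field_simps)
  finally show ?thesis .
qed

lemma inverse_exp_minus_one_reflect:
  fixes y :: real
  assumes "y \<noteq> 0"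
  shows "1 / (exp (-y) - 1) = -1 - 1 / (exp y - 1)"
proof -
  have "exp y - 1 \<noteq> 0" and "1 - exp y \<noteq> 0"
    using assms by auto
  then show ?thesis
    by (simp add: exp_minus field_simps)
qed

lemma inverse_exp_minus_one_approx:
  fixes y :: real
  assumes "y \<noteq> 0" "\<bar>y\<bar> \<le> 3/2"
  shows "\<bar>1 / (exp y - 1) - (1 / y - 1 / 2)\<bar> \<le> \<bar>y\<bar> / 10"
proof -
  have pos: "\<bar>1 / (exp z - 1) - (1 / z - 1 / 2)\<bar> \<le> z / 10" if "0 < z" "z \<le> 3/2" for z :: real
    using inverse_exp_minus_one_upper[of z] inverse_exp_minus_one_lower[of z] that by linarith
  show ?thesis
  proof (cases "y > 0")
    case True
    then show ?thesis using pos[of y] assms by simp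
  next
    case False
    then have "0 < -y" "-y \<le> 3/2"
      using assms by auto
    moreover have "1 / (exp y - 1) - (1 / y - 1 / 2)
        = -(1 / (exp (-y) - 1) - (1 / (-y) - 1 / 2))"
      using inverse_exp_minus_one_reflect[of "-y"] assms by simp
    ultimately show ?thesis
      using pos[of "-y"] False by simp
  qed
qed

text \<open>An odd integer k is never close to n sqrt 2: since k^2 - 2n^2 is odd, the product
  (k - n sqrt 2)(k + n sqrt 2) has absolute value at least 1.\<close>

lemma odd_far_from_sqrt2_multiple:
  fixes k n :: int
  assumes "odd k" "n \<noteq> 0"
  shows "sqrt 2 / (5 * \<bar>real_of_int n\<bar>) < \<bar>real_of_int k - real_of_int n * sqrt 2\<bar>"
proof (rule ccontr)
  define d where "d = real_of_int k - real_of_int n * sqrt 2"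
  define N where "N = \<bar>real_of_int n\<bar>"
  have N1: "1 \<le> N"
    using assms(2) unfolding N_def by linarith
  have s2: "sqrt 2 * sqrt 2 = (2::real)"
    by simp
  assume "\<not> ?thesis"
  then have "\<bar>d\<bar> \<le> sqrt 2 / (5 * N)"
    unfolding d_def N_def by simp
  then have dN: "\<bar>d\<bar> * N \<le> sqrt 2 / 5"
    using N1 by (simp add: field_simps)
  moreover have "\<bar>d\<bar> \<le> \<bar>d\<bar> * N"
    using N1 by (simp add: mult_le_cancel_left1)
  ultimately have d_small: "\<bar>d\<bar> \<le> sqrt 2 / 5"
    by linarith
  have "odd (k^2 - 2 * n^2)"
    using assms(1) by simp
  then have "k^2 - 2 * n^2 \<noteq> 0"
    by (metis even_zero)
  then have "1 \<le> \<bar>real_of_int (k^2 - 2 * n^2)\<bar>"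
    by linarith
  also have "real_of_int (k^2 - 2 * n^2) = d * (d + 2 * real_of_int n * sqrt 2)"
    unfolding d_def by (simp add: algebra_simps power2_eq_square s2)
  also have "\<bar>d * (d + 2 * real_of_int n * sqrt 2)\<bar> \<le> \<bar>d\<bar> * (\<bar>d\<bar> + 2 * N * sqrt 2)"
    unfolding abs_mult N_def
    by (intro mult_left_mono) (auto simp: abs_mult intro: order.trans[OF abs_triangle_ineq])
  also have "\<dots> = \<bar>d\<bar> * \<bar>d\<bar> + 2 * sqrt 2 * (\<bar>d\<bar> * N)"
    by (simp add: algebra_simps)
  also have "\<dots> \<le> (sqrt 2 / 5) * (sqrt 2 / 5) + 2 * sqrt 2 * (sqrt 2 / 5)"
    using d_small dN by (intro add_mono mult_mono mult_left_mono) auto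
  also have "\<dots> = 22 / 25"
    using s2 by (simp add: field_simps)
  finally show False
    by simp
qed

lemma integers_far_from_approximation:
  fixes m n :: int
  assumes "n \<noteq> 0"
  shows "sqrt 2 / (10 * \<bar>real_of_int n\<bar>) < \<bar>real_of_int m - (real_of_int n / sqrt 2 - 1 / 2)\<bar>"
proof -
  have "real_of_int n / sqrt 2 = real_of_int n * sqrt 2 / 2"
    by (simp add: field_simps)
  then have "real_of_int m - (real_of_int n / sqrt 2 - 1 / 2)
      = (real_of_int (2 * m + 1) - real_of_int n * sqrt 2) / 2"
    by simp
  then show ?thesis
    using odd_far_from_sqrt2_multiple[of "2 * m + 1" n] assms by simp
qed

lemma floor_eq_if_closer_than_integers:
  fixes u c \<delta> :: real
  assumes far: "\<And>m::int. \<delta> < \<bar>real_of_int m - c\<bar>" and near: "\<bar>u - c\<bar> \<le> \<delta>"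
  shows "\<lfloor>u\<rfloor> = \<lfloor>c\<rfloor>"
proof (rule linorder_cases[of "\<lfloor>u\<rfloor>" "\<lfloor>c\<rfloor>"])
  assume "\<lfloor>u\<rfloor> < \<lfloor>c\<rfloor>"
  then have "u < real_of_int \<lfloor>c\<rfloor>" and "real_of_int \<lfloor>c\<rfloor> \<le> c"
    by linarith+
  then show ?thesis
    using far[of "\<lfloor>c\<rfloor>"] near by linarith
next
  assume "\<lfloor>c\<rfloor> < \<lfloor>u\<rfloor>"
  then have "c < real_of_int \<lfloor>u\<rfloor>" and "real_of_int \<lfloor>u\<rfloor> \<le> u"
    by linarith+
  then show ?thesis
    using far[of "\<lfloor>u\<rfloor>"] near by linarith
qed

theorem mainTheorem14:
  fixes n :: int
  assumes "n \<noteq> 0"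
  shows "\<lfloor>1 / (exp (sqrt 2 / real_of_int n) - 1)\<rfloor> = \<lfloor>real_of_int n / sqrt 2 - 1 / 2\<rfloor>"
proof (rule floor_eq_if_closer_than_integers)
  define y where "y = sqrt 2 / real_of_int n"
  have "\<bar>y\<bar> \<le> sqrt 2"
    using assms unfolding y_def by (simp add: abs_div divide_le_eq)
  also have "sqrt 2 \<le> (3/2 :: real)"
    by (rule real_le_lsqrt) (auto simp: power2_eq_square)
  finally have "\<bar>y\<bar> \<le> 3/2" .
  moreover have "y \<noteq> 0" "1 / y = real_of_int n / sqrt 2"
    "\<bar>y\<bar> / 10 = sqrt 2 / (10 * \<bar>real_of_int n\<bar>)"
    using assms by (simp_all add: y_def abs_div)
  ultimately show "\<bar>1 / (exp (sqrt 2 / real_of_int n) - 1) - (real_of_int n / sqrt 2 - 1 / 2)\<bar>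
      \<le> sqrt 2 / (10 * \<bar>real_of_int n\<bar>)"
    using inverse_exp_minus_one_approx[of y] unfolding y_def by simp
  show "sqrt 2 / (10 * \<bar>real_of_int n\<bar>) < \<bar>real_of_int m - (real_of_int n / sqrt 2 - 1 / 2)\<bar>"
    for m :: int
    using integers_far_from_approximation[OF assms] .
qed

end
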